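(* Let $({\rm X},{\sf d},\mathfrak m)$ be a metric measure space and $q\in[1,\infty]$. Let $b\in{\rm Der}^q({\rm X})$. Then one can write $b=a+c$, where $c$ is a cycle and $a\in{\rm Der}^q({\rm X})$ is an acyclic subderivation of $b$.
   Context: A metric measure space is a complete separable metric space $({\rm X},{\sf d})$ with a nonnegative Borel measure $\mathfrak m$ finite on bounded Borel sets. ${\rm LIP}_{bs}({\rm X})$ denotes bounded Lipschitz functions with bounded support, and for Lipschitz $f$, ${\rm lip}_a(f)(x)=\limsup_{y,z\to x,\,y\ne z}|f(y)-f(z)|/{\sf d}(y,z)$ at non-isolated $x$ (and $0$ at isolated points). A Lipschitz $q$-derivation is a linear map $b\colon{\rm LIP}_{bs}({\rm X})\to L^q(\mathfrak m)$ satisfying $b(fg)=f\,b(g)+g\,b(f)$ and such that for some $g\in L^q(\mathfrak m)^+$ one has $|b(f)|\le g\,{\rm lip}_a(f)$ $\mathfrak m$-a.e. for every $f\in{\rm LIP}_{bs}({\rm X})$; the $\mathfrak m$-a.e. smallest such $g$ is denoted $|b|$. ${\rm Der}^q({\rm X})$ is the space of these derivations (a module over $L^\infty(\mathfrak m)$ with pointwise operations). A boundedly-finite signed Borel measure is a map $\mu$ on bounded Borel sets whose restriction to each bounded Borel set is a finite signed Borel measure. A derivation $b$ has divergence ${\bf div}(b)=\mu$ (such a measure) if $\int b(f)\,d\mathfrak m=-\int f\,d\mu$ for all $f\in{\rm LIP}_{bs}({\rm X})$. A derivation $s\in{\rm Der}^q({\rm X})$ is a subderivation of $b$ if $|b-s|+|s|\le|b|$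 $\mathfrak m$-a.e. A cycle is a derivation $c$ having divergence with ${\bf div}(c)=0$; a subcycle of $b$ is a cycle that is a subderivation of $b$; $b$ is acyclic if its only subcycle is $0$. *)

theory Defs
  imports "HOL-Analysis.Analysis"
begin

definition mms :: "'a::polish_space measure \<Rightarrow> bool" where
  "mms m \<longleftrightarrow> sets m = sets borel \<and>
     (\<forall>B. B \<in> sets borel \<and> bounded B \<longrightarrow> emeasure m B < \<infinity>)"

text \<open>Membership in L^q(m), q in [1,infinity]; q = top encodes q = infinity.\<close>
definition Lq :: "'a measure \<Rightarrow> ennreal \<Rightarrow> ('a \<Rightarrow> real) \<Rightarrow> bool" where
  "Lq m q g \<longleftrightarrow> g \<in> borel_measurable m \<and>
     (if q = top then (\<exists>C. AE x in m. \<bar>g x\<bar> \<le> C)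
      else (\<integral>\<^sup>+ x. ennreal (\<bar>g x\<bar> powr enn2real q) \<partial>m) < \<infinity>)"

definition lip_bs :: "('a::metric_space \<Rightarrow> real) \<Rightarrow> bool" where
  "lip_bs f \<longleftrightarrow> (\<exists>L. L-lipschitz_on UNIV f) \<and> bounded (range f) \<and> bounded {x. f x \<noteq> 0}"

text \<open>Asymptotic Lipschitz constant: limsup of difference quotients as y,z tend to x
  (y \<noteq> z), i.e. inf over r > 0 of the Lipschitz constant on the ball B(x,r);
  0 at isolated points.\<close>
definition lip_a :: "('a::metric_space \<Rightarrow> real) \<Rightarrow> 'a \<Rightarrow> real" where
  "lip_a f x = (if x islimpt UNIV then
     Inf ((\<lambda>r. Sup {\<bar>f y - f z\<bar> / dist y z | y z. y \<in> ball x r \<and> z \<in> ball x r \<and> y \<noteq> z}) ` {0<..})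
   else 0)"

definition der_eq :: "'a::metric_space measure \<Rightarrow> (('a \<Rightarrow> real) \<Rightarrow> 'a \<Rightarrow> real)
   \<Rightarrow> (('a \<Rightarrow> real) \<Rightarrow> 'a \<Rightarrow> real) \<Rightarrow> bool" where
  "der_eq m b b' \<longleftrightarrow> (\<forall>f. lip_bs f \<longrightarrow> (AE x in m. b f x = b' f x))"

definition der_bound :: "'a::metric_space measure \<Rightarrow> ennreal \<Rightarrow> (('a \<Rightarrow> real) \<Rightarrow> 'a \<Rightarrow> real)
   \<Rightarrow> ('a \<Rightarrow> real) \<Rightarrow> bool" where
  "der_bound m q b g \<longleftrightarrow> Lq m q g \<and> (AE x in m. g x \<ge> 0) \<and>
     (\<forall>f. lip_bs f \<longrightarrow> (AE x in m. \<bar>b f x\<bar> \<le> g x * lip_a f x))"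

definition is_derivation :: "'a::metric_space measure \<Rightarrow> ennreal
   \<Rightarrow> (('a \<Rightarrow> real) \<Rightarrow> 'a \<Rightarrow> real) \<Rightarrow> bool" where
  "is_derivation m q b \<longleftrightarrow>
     (\<forall>f. lip_bs f \<longrightarrow> Lq m q (b f)) \<and>
     (\<forall>f g. lip_bs f \<longrightarrow> lip_bs g \<longrightarrow> (AE x in m. b (\<lambda>y. f y + g y) x = b f x + b g x)) \<and>
     (\<forall>f (c::real). lip_bs f \<longrightarrow> (AE x in m. b (\<lambda>y. c * f y) x = c * b f x)) \<and>
     (\<forall>f g. lip_bs f \<longrightarrow> lip_bs g \<longrightarrow>
        (AE x in m. b (\<lambda>y. f y * g y) x = f x * b g x + g x * b f x)) \<and>
     (\<exists>g. der_bound m q b g)"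

definition is_der_norm :: "'a::metric_space measure \<Rightarrow> ennreal \<Rightarrow> (('a \<Rightarrow> real) \<Rightarrow> 'a \<Rightarrow> real)
   \<Rightarrow> ('a \<Rightarrow> real) \<Rightarrow> bool" where
  "is_der_norm m q b G \<longleftrightarrow> der_bound m q b G \<and>
     (\<forall>g. der_bound m q b g \<longrightarrow> (AE x in m. G x \<le> g x))"

definition der_norm :: "'a::metric_space measure \<Rightarrow> ennreal \<Rightarrow> (('a \<Rightarrow> real) \<Rightarrow> 'a \<Rightarrow> real)
   \<Rightarrow> 'a \<Rightarrow> real" where
  "der_norm m q b = (SOME G. is_der_norm m q b G)"

definition der_diff :: "(('a \<Rightarrow> real) \<Rightarrow> 'a \<Rightarrow> real) \<Rightarrow> (('a \<Rightarrow> real) \<Rightarrow> 'a \<Rightarrow> real)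
   \<Rightarrow> ('a \<Rightarrow> real) \<Rightarrow> 'a \<Rightarrow> real" where
  "der_diff b s = (\<lambda>f x. b f x - s f x)"

definition der_add :: "(('a \<Rightarrow> real) \<Rightarrow> 'a \<Rightarrow> real) \<Rightarrow> (('a \<Rightarrow> real) \<Rightarrow> 'a \<Rightarrow> real)
   \<Rightarrow> ('a \<Rightarrow> real) \<Rightarrow> 'a \<Rightarrow> real" where
  "der_add b s = (\<lambda>f x. b f x + s f x)"

definition subderivation :: "'a::metric_space measure \<Rightarrow> ennreal
   \<Rightarrow> (('a \<Rightarrow> real) \<Rightarrow> 'a \<Rightarrow> real) \<Rightarrow> (('a \<Rightarrow> real) \<Rightarrow> 'a \<Rightarrow> real) \<Rightarrow> bool" where
  "subderivation m q s b \<longleftrightarrow> is_derivation m q s \<and>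
     (AE x in m. der_norm m q (der_diff b s) x + der_norm m q s x \<le> der_norm m q b x)"

text \<open>b has divergence equal to the zero measure: int b(f) dm = - int f d0 = 0
  for all f in LIP_bs (b(f) being m-integrable).\<close>
definition zero_divergence :: "'a::metric_space measure \<Rightarrow> (('a \<Rightarrow> real) \<Rightarrow> 'a \<Rightarrow> real) \<Rightarrow> bool" where
  "zero_divergence m b \<longleftrightarrow> (\<forall>f. lip_bs f \<longrightarrow> integrable m (b f) \<and> integral\<^sup>L m (b f) = 0)"

definition is_cycle :: "'a::metric_space measure \<Rightarrow> ennreal \<Rightarrow> (('a \<Rightarrow> real) \<Rightarrow> 'a \<Rightarrow> real) \<Rightarrow> bool" where
  "is_cycle m q c \<longleftrightarrow> is_derivation m q c \<and> zero_divergence m c"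

definition acyclic_der :: "'a::metric_space measure \<Rightarrow> ennreal \<Rightarrow> (('a \<Rightarrow> real) \<Rightarrow> 'a \<Rightarrow> real) \<Rightarrow> bool" where
  "acyclic_der m q b \<longleftrightarrow>
     (\<forall>c. is_cycle m q c \<and> subderivation m q c b \<longrightarrow> der_eq m c (\<lambda>f x. 0))"

end

(*
  Weigh derivations by mass c = \<integral> |c| w / (1 + |b|), for a fixed integrable w > 0, and
  exhaust b greedily by cycles: c\<^sub>n is a subcycle of b - (c\<^sub>0 + ... + c\<^sub>n\<^sub>-\<^sub>1) whose mass
  is at least half of the largest possible one. Subderivations compose, so the norms add up,
  \<Sum> |c\<^sub>n| \<le> |b|; hence c = \<Sum> c\<^sub>n converges, and it is a cycle by dominated convergence
  (b is locally integrable because q \<ge> 1). The remainder a = b - c satisfies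
  |a| \<le> |b| - \<Sum> |c\<^sub>n|, so it is a subderivation of b. If c' is a subcycle of a, then
  (c - c\<^sub>0 - ... - c\<^sub>k\<^sub>-\<^sub>1) + c' is a subcycle of b - c\<^sub>0 - ... - c\<^sub>k\<^sub>-\<^sub>1, so
  mass c' \<le> 2 mass c\<^sub>k, which tends to 0 since \<Sum> mass c\<^sub>n \<le> mass b; thus c' = 0.

  That the minimal bound |b| exists at all follows by minimizing \<integral> arctan g \<cdot> w over all
  bounds g, which form a family closed under pointwise minima and decreasing limits.
*)

theory Submission
  imports Defs
begin

section \<open>Lebesgue spaces\<close>

lemma Lq_measurable: "Lq m q g \<Longrightarrow> g \<in> borel_measurable m"
  by (simp add: Lq_def)

lemma Lq_top_iff: "Lq m top g \<longleftrightarrow> g \<in> borel_measurable m \<and> (\<exists>C. AE x in m. \<bar>g x\<bar> \<le> C)"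
  by (simp add: Lq_def)

lemma Lq_finite_iff:
  "q \<noteq> top \<Longrightarrow> Lq m q g \<longleftrightarrow>
     g \<in> borel_measurable m \<and> (\<integral>\<^sup>+ x. ennreal (\<bar>g x\<bar> powr enn2real q) \<partial>m) < \<infinity>"
  by (simp add: Lq_def)

lemma Lq_mono:
  assumes "Lq m q g" "h \<in> borel_measurable m" "AE x in m. \<bar>h x\<bar> \<le> \<bar>g x\<bar>"
  shows "Lq m q h"
proof (cases "q = top")
  case True
  then obtain C where "AE x in m. \<bar>g x\<bar> \<le> C" using assms(1) by (auto simp: Lq_top_iff)
  with assms(3) have "AE x in m. \<bar>h x\<bar> \<le> C" by eventually_elim auto
  then show ?thesis using True assms(2) by (auto simp: Lq_top_iff)
next
  case False
  have "(\<integral>\<^sup>+ x. ennreal (\<bar>h x\<bar> powr enn2real q) \<partial>m) \<le> (\<integral>\<^sup>+ x. ennreal (\<bar>g x\<bar> powr enn2real q) \<partial>m)"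
    using assms(3) by (intro nn_integral_mono_AE, eventually_elim) (simp add: ennreal_leI powr_mono2)
  also have "\<dots> < \<infinity>" using assms(1) False by (simp add: Lq_finite_iff)
  finally show ?thesis using False assms(2) by (simp add: Lq_finite_iff)
qed

lemma Lq_zero: "Lq m q (\<lambda>x. 0)"
  by (auto simp: Lq_def)

lemma abs_add_powr_le:
  fixes a b p :: real
  assumes "0 \<le> p"
  shows "\<bar>a + b\<bar> powr p \<le> 2 powr p * (\<bar>a\<bar> powr p + \<bar>b\<bar> powr p)"
proof -
  have "\<bar>a + b\<bar> powr p \<le> (2 * max \<bar>a\<bar> \<bar>b\<bar>) powr p"
    using assms by (intro powr_mono2) auto
  also have "\<dots> = 2 powr p * max \<bar>a\<bar> \<bar>b\<bar> powr p"
    by (simp add: powr_mult)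
  also have "\<dots> \<le> 2 powr p * (\<bar>a\<bar> powr p + \<bar>b\<bar> powr p)"
    by (intro mult_left_mono) (auto simp: max_def)
  finally show ?thesis .
qed

lemma Lq_add:
  assumes "Lq m q g" "Lq m q h"
  shows "Lq m q (\<lambda>x. g x + h x)"
proof (cases "q = top")
  case True
  then obtain C D where "AE x in m. \<bar>g x\<bar> \<le> C" "AE x in m. \<bar>h x\<bar> \<le> D"
    using assms by (auto simp: Lq_top_iff)
  then have "AE x in m. \<bar>g x + h x\<bar> \<le> C + D" by eventually_elim auto
  then show ?thesis using True assms by (auto simp: Lq_top_iff)
next
  case False
  define p where "p = enn2real q"
  have [measurable]: "g \<in> borel_measurable m" "h \<in> borel_measurable m"
    using assms by (auto simp: Lq_measurable)
  have "(\<integral>\<^sup>+ x. ennreal (\<bar>g x + h x\<bar> powr p) \<partial>m) \<le>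
        (\<integral>\<^sup>+ x. ennreal (2 powr p) * (ennreal (\<bar>g x\<bar> powr p) + ennreal (\<bar>h x\<bar> powr p)) \<partial>m)"
    by (intro nn_integral_mono)
      (simp add: p_def abs_add_powr_le ennreal_leI flip: ennreal_mult ennreal_plus)
  also have "\<dots> = ennreal (2 powr p) *
      ((\<integral>\<^sup>+ x. ennreal (\<bar>g x\<bar> powr p) \<partial>m) + (\<integral>\<^sup>+ x. ennreal (\<bar>h x\<bar> powr p) \<partial>m))"
    by (simp add: nn_integral_cmult nn_integral_add)
  also have "\<dots> < \<infinity>"
    using assms False by (simp add: Lq_finite_iff p_def ennreal_mult_less_top)
  finally show ?thesis using False by (simp add: Lq_finite_iff p_def)
qed

lemma Lq_cmult:
  assumes "Lq m q g"
  shows "Lq m q (\<lambda>x. c * g x)"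
proof (cases "q = top")
  case True
  then obtain C where "AE x in m. \<bar>g x\<bar> \<le> C" using assms by (auto simp: Lq_top_iff)
  then have "AE x in m. \<bar>c * g x\<bar> \<le> \<bar>c\<bar> * C"
    by eventually_elim (auto simp: abs_mult mult_left_mono)
  then show ?thesis using True assms by (auto simp: Lq_top_iff Lq_measurable)
next
  case False
  define p where "p = enn2real q"
  have [measurable]: "g \<in> borel_measurable m" using assms by (rule Lq_measurable)
  have "(\<integral>\<^sup>+ x. ennreal (\<bar>c * g x\<bar> powr p) \<partial>m) =
        ennreal (\<bar>c\<bar> powr p) * (\<integral>\<^sup>+ x. ennreal (\<bar>g x\<bar> powr p) \<partial>m)"
    by (simp add: abs_mult powr_mult ennreal_mult nn_integral_cmult)
  also have "\<dots> < \<infinity>"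
    using assms False by (simp add: Lq_finite_iff p_def ennreal_mult_less_top)
  finally show ?thesis using False by (simp add: Lq_finite_iff p_def)
qed

lemma Lq_integrable_indicator:
  assumes "1 \<le> q" "Lq m q g" "A \<in> sets m" "emeasure m A < \<infinity>"
  shows "integrable m (\<lambda>x. g x * indicator A x)"
proof -
  have [measurable]: "g \<in> borel_measurable m" using assms(2) by (rule Lq_measurable)
  have int_A: "integrable m (indicator A :: _ \<Rightarrow> real)"
    using assms(3,4) by (simp add: integrable_real_indicator)
  show ?thesis
  proof (cases "q = top")
    case True
    then obtain C where C: "AE x in m. \<bar>g x\<bar> \<le> C" using assms(2) by (auto simp: Lq_top_iff)
    show ?thesis
    proof (rule Bochner_Integration.integrable_bound)
      show "integrable m (\<lambda>x. indicator A x *\<^sub>R C)" using int_A by simp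
      show "AE x in m. norm (g x * indicator A x) \<le> norm (indicator A x *\<^sub>R C)"
        using C by eventually_elim (auto simp: indicator_def)
    qed (use assms(3) in simp)
  next
    case False
    define p where "p = enn2real q"
    have "1 \<le> p"
      using enn2real_mono[OF assms(1)] False by (simp add: p_def less_top)
    have "integrable m (\<lambda>x. \<bar>g x\<bar> powr p)"
      using assms(2) False by (intro integrableI_nonneg) (auto simp: Lq_finite_iff p_def)
    then have "integrable m (\<lambda>x. indicator A x + \<bar>g x\<bar> powr p)"
      using int_A by (rule Bochner_Integration.integrable_add[rotated])
    moreover have "\<bar>g x\<bar> \<le> 1 + \<bar>g x\<bar> powr p" for x
    proof (cases "\<bar>g x\<bar> \<le> 1")
      case False
      then have "\<bar>g x\<bar> powr 1 \<le> \<bar>g x\<bar> powr p" using \<open>1 \<le> p\<close> by (intro powr_mono) auto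
      then show ?thesis using False by simp
    qed (simp add: add_increasing2)
    then have "AE x in m. norm (g x * indicator A x) \<le> norm (indicator A x + \<bar>g x\<bar> powr p)"
      by (intro AE_I2) (auto simp: indicator_def)
    moreover have "(\<lambda>x. g x * indicator A x) \<in> borel_measurable m"
      using assms(3) by simp
    ultimately show ?thesis
      by (blast intro: Bochner_Integration.integrable_bound)
  qed
qed

section \<open>The asymptotic Lipschitz constant\<close>

definition diff_quotients :: "('a::metric_space \<Rightarrow> real) \<Rightarrow> 'a \<Rightarrow> real \<Rightarrow> real set" where
  "diff_quotients f x r =
     {\<bar>f y - f z\<bar> / dist y z | y z. y \<in> ball x r \<and> z \<in> ball x r \<and> y \<noteq> z}"

lemma lip_a_altdef:
  "lip_a f x = (if x islimpt UNIV then INF r\<in>{0<..}. Sup (diff_quotients f x r) else 0)"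
  by (simp add: lip_a_def diff_quotients_def)

lemma diff_quotients_nonempty:
  assumes "x islimpt UNIV" "0 < r"
  shows "diff_quotients f x r \<noteq> {}"
proof -
  obtain y where "y \<noteq> x" "dist y x < r"
    using assms unfolding islimpt_approachable by blast
  then have "y \<in> ball x r" "x \<in> ball x r" "y \<noteq> x"
    using assms(2) by (auto simp: dist_commute)
  then have "\<bar>f y - f x\<bar> / dist y x \<in> diff_quotients f x r"
    unfolding diff_quotients_def by blast
  then show ?thesis by blast
qed

lemma diff_quotients_bounds:
  assumes "L-lipschitz_on UNIV f" "v \<in> diff_quotients f x r"
  shows "0 \<le> v" "v \<le> L"
proof -
  obtain y z where v: "v = \<bar>f y - f z\<bar> / dist y z" "y \<noteq> z"
    using assms(2) unfolding diff_quotients_def by blast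
  have "\<bar>f y - f z\<bar> \<le> L * dist y z"
    using assms(1) by (auto simp: lipschitz_on_def dist_real_def)
  then show "0 \<le> v" "v \<le> L" using v by (auto simp: divide_le_eq)
qed

lemma Sup_diff_quotients_bounds:
  assumes "L-lipschitz_on UNIV f" "x islimpt UNIV" "0 < r"
  shows "0 \<le> Sup (diff_quotients f x r)" "Sup (diff_quotients f x r) \<le> L"
proof -
  note ne = diff_quotients_nonempty[OF assms(2,3), of f]
  have bdd: "bdd_above (diff_quotients f x r)"
    using diff_quotients_bounds[OF assms(1)] by (intro bdd_aboveI) blast
  obtain v where v: "v \<in> diff_quotients f x r" using ne by blast
  show "0 \<le> Sup (diff_quotients f x r)"
    using diff_quotients_bounds(1)[OF assms(1) v] cSup_upper[OF v bdd] by linarith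
  show "Sup (diff_quotients f x r) \<le> L"
    using diff_quotients_bounds(2)[OF assms(1)] by (intro cSup_least[OF ne]) blast
qed

lemma lip_a_bounds:
  assumes "L-lipschitz_on UNIV f"
  shows "0 \<le> lip_a f x" "lip_a f x \<le> L"
proof -
  have "0 \<le> lip_a f x \<and> lip_a f x \<le> L"
  proof (cases "x islimpt UNIV")
    case True
    note Sup_bounds = Sup_diff_quotients_bounds[OF assms True]
    have bdd: "bdd_below ((\<lambda>r. Sup (diff_quotients f x r)) ` {0<..})"
      using Sup_bounds(1) by (intro bdd_belowI) blast
    have "0 \<le> (INF r\<in>{0<..}. Sup (diff_quotients f x r))"
      using Sup_bounds(1) by (intro cINF_greatest) auto
    moreover have "(INF r\<in>{0<..}. Sup (diff_quotients f x r)) \<le> Sup (diff_quotients f x 1)"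
      using bdd by (intro cINF_lower) auto
    ultimately show ?thesis
      using True Sup_bounds(2)[of 1] by (simp add: lip_a_altdef)
  next
    case False
    then show ?thesis using assms by (simp add: lip_a_altdef lipschitz_on_def)
  qed
  then show "0 \<le> lip_a f x" "lip_a f x \<le> L" by auto
qed

lemma lip_a_eq_0_if_vanishing_near:
  assumes "L-lipschitz_on UNIV f" "0 < r" "\<And>y. y \<in> ball x r \<Longrightarrow> f y = 0"
  shows "lip_a f x = 0"
proof (cases "x islimpt UNIV")
  case True
  have "diff_quotients f x r \<subseteq> {0}"
    using assms(3) by (auto simp: diff_quotients_def)
  then have "Sup (diff_quotients f x r) \<le> 0"
    using diff_quotients_nonempty[OF True assms(2)] by (intro cSup_least) auto
  moreover have "bdd_below ((\<lambda>r. Sup (diff_quotients f x r)) ` {0<..})"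
    using Sup_diff_quotients_bounds(1)[OF assms(1) True] by (intro bdd_belowI) blast
  ultimately have "lip_a f x \<le> 0"
    using True assms(2) cINF_lower[of "\<lambda>r. Sup (diff_quotients f x r)" "{0<..}" r]
    by (simp add: lip_a_altdef)
  then show ?thesis using lip_a_bounds(1)[OF assms(1), of x] by linarith
qed (simp add: lip_a_altdef)

definition support_nbhd :: "('a::metric_space \<Rightarrow> real) \<Rightarrow> 'a set" where
  "support_nbhd f = (\<Union>y\<in>{y. f y \<noteq> 0}. ball y 1)"

lemma open_support_nbhd: "open (support_nbhd f)"
  by (auto simp: support_nbhd_def)

lemma bounded_support_nbhd:
  assumes "bounded {x. f x \<noteq> 0}"
  shows "bounded (support_nbhd f)"
proof -
  obtain a e where e: "\<And>y. f y \<noteq> 0 \<Longrightarrow> dist a y \<le> e"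
    using assms unfolding bounded_def by blast
  have "dist a x \<le> e + 1" if x: "x \<in> support_nbhd f" for x
  proof -
    obtain y where "f y \<noteq> 0" "dist y x < 1"
      using x by (auto simp: support_nbhd_def)
    then show ?thesis using e dist_triangle[of a x y] by fastforce
  qed
  then show ?thesis unfolding bounded_def by blast
qed

lemma lip_a_eq_0_outside_support_nbhd:
  assumes "L-lipschitz_on UNIV f" "x \<notin> support_nbhd f"
  shows "lip_a f x = 0"
  using assms by (intro lip_a_eq_0_if_vanishing_near[of L f 1])
    (auto simp: support_nbhd_def dist_commute)

lemma lip_bs_lipschitz: "lip_bs f \<Longrightarrow> \<exists>L. L-lipschitz_on UNIV f"
  by (simp add: lip_bs_def)

lemma lip_a_nonneg: "lip_bs f \<Longrightarrow> 0 \<le> lip_a f x"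
  using lip_a_bounds(1) lip_bs_lipschitz by blast

section \<open>Minimal bounds of derivations\<close>

lemma der_bound_nonneg: "der_bound m q b g \<Longrightarrow> AE x in m. 0 \<le> g x"
  by (simp add: der_bound_def)

lemma der_bound_Lq: "der_bound m q b g \<Longrightarrow> Lq m q g"
  by (simp add: der_bound_def)

lemma der_bound_measurable: "der_bound m q b g \<Longrightarrow> g \<in> borel_measurable m"
  unfolding der_bound_def by (blast dest: Lq_measurable)

lemma der_bound_le: "der_bound m q b g \<Longrightarrow> lip_bs f \<Longrightarrow> AE x in m. \<bar>b f x\<bar> \<le> g x * lip_a f x"
  by (simp add: der_bound_def)

lemma der_boundI:
  assumes "Lq m q g" "AE x in m. 0 \<le> g x"
    "\<And>f. lip_bs f \<Longrightarrow> AE x in m. \<bar>b f x\<bar> \<le> g x * lip_a f x"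
  shows "der_bound m q b g"
  using assms by (simp add: der_bound_def)

lemma der_bound_max_0:
  assumes "der_bound m q b g"
  shows "der_bound m q b (\<lambda>x. max (g x) 0)"
proof (rule der_boundI)
  have [measurable]: "g \<in> borel_measurable m" by (rule der_bound_measurable[OF assms])
  show "Lq m q (\<lambda>x. max (g x) 0)"
    by (rule Lq_mono[OF der_bound_Lq[OF assms]]) auto
  fix f :: "'a \<Rightarrow> real" assume f: "lip_bs f"
  from der_bound_le[OF assms f]
  show "AE x in m. \<bar>b f x\<bar> \<le> max (g x) 0 * lip_a f x"
    by eventually_elim (meson lip_a_nonneg[OF f] max.cobounded1 mult_right_mono order_trans)
qed simp

lemma der_bound_min:
  assumes "der_bound m q b g" "der_bound m q b h"
  shows "der_bound m q b (\<lambda>x. min (g x) (h x))"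
proof (rule der_boundI)
  note nonneg = der_bound_nonneg[OF assms(1)] der_bound_nonneg[OF assms(2)]
  have [measurable]: "g \<in> borel_measurable m" "h \<in> borel_measurable m"
    using assms by (simp_all add: der_bound_measurable)
  show "Lq m q (\<lambda>x. min (g x) (h x))"
  proof (rule Lq_mono[OF der_bound_Lq[OF assms(1)]])
    show "(\<lambda>x. min (g x) (h x)) \<in> borel_measurable m" by measurable
    show "AE x in m. \<bar>min (g x) (h x)\<bar> \<le> \<bar>g x\<bar>"
      using nonneg by eventually_elim auto
  qed
  show "AE x in m. 0 \<le> min (g x) (h x)"
    using nonneg by eventually_elim auto
  fix f :: "'a \<Rightarrow> real" assume "lip_bs f"
  from der_bound_le[OF assms(1) this] der_bound_le[OF assms(2) this]
  show "AE x in m. \<bar>b f x\<bar> \<le> min (g x) (h x) * lip_a f x"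
    by eventually_elim (auto simp: min_def)
qed

lemma der_bound_LIMSEQ:
  assumes bound: "\<And>n. der_bound m q b (g n)" and lim: "\<And>x. (\<lambda>n. g n x) \<longlonglongrightarrow> G x"
    and "\<And>x. 0 \<le> G x" "\<And>x. G x \<le> g 0 x"
  shows "der_bound m q b G"
proof (rule der_boundI)
  have "G \<in> borel_measurable m"
    by (rule borel_measurable_LIMSEQ_real[OF lim der_bound_measurable[OF bound]])
  moreover have "\<bar>G x\<bar> \<le> \<bar>g 0 x\<bar>" for x
    using assms(3,4)[of x] by linarith
  ultimately show "Lq m q G"
    by (intro Lq_mono[OF der_bound_Lq[OF bound[of 0]]]) auto
  fix f :: "'a \<Rightarrow> real" assume "lip_bs f"
  then have "AE x in m. \<forall>n. \<bar>b f x\<bar> \<le> g n x * lip_a f x"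
    by (simp add: AE_all_countable der_bound_le[OF bound])
  then show "AE x in m. \<bar>b f x\<bar> \<le> G x * lip_a f x"
    by eventually_elim (rule LIMSEQ_le_const[OF tendsto_mult_right[OF lim]], blast)
qed (use assms(3) in simp)

lemma integrable_arctan_weighted:
  fixes w g :: "'a \<Rightarrow> real"
  assumes "integrable m w" "\<And>x. 0 \<le> w x" "g \<in> borel_measurable m"
  shows "integrable m (\<lambda>x. arctan (g x) * w x)"
proof (rule Bochner_Integration.integrable_bound)
  show "integrable m (\<lambda>x. pi / 2 * w x)" using assms(1) by simp
  show "(\<lambda>x. arctan (g x) * w x) \<in> borel_measurable m"
    using assms(1,3) by measurable
  have "\<bar>arctan (g x)\<bar> * w x \<le> pi / 2 * w x" for x
    using arctan_bounded[of "g x"] assms(2)[of x] by (intro mult_right_mono) auto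
  then show "AE x in m. norm (arctan (g x) * w x) \<le> norm (pi / 2 * w x)"
    using assms(2) by (simp add: abs_mult)
qed

text \<open>The functional g \<mapsto> \<integral> arctan g \<cdot> w is finite on all measurable functions and strictly
  monotone up to null sets, which is what makes a minimizing sequence useful.\<close>

lemma AE_eq_of_arctan_weighted_integral_le:
  fixes w g h :: "'a \<Rightarrow> real"
  assumes w: "integrable m w" "\<And>x. 0 < w x"
    and meas: "g \<in> borel_measurable m" "h \<in> borel_measurable m"
    and le: "\<And>x. h x \<le> g x"
    and int_le: "(\<integral>x. arctan (g x) * w x \<partial>m) \<le> (\<integral>x. arctan (h x) * w x \<partial>m)"
  shows "AE x in m. g x = h x"
proof -
  define d where "d x = arctan (g x) * w x - arctan (h x) * w x" for x
  have int_d: "integrable m d"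
    unfolding d_def using w meas
    by (intro Bochner_Integration.integrable_diff integrable_arctan_weighted) (auto intro: less_imp_le)
  have "0 \<le> d x" for x
    unfolding d_def left_diff_distrib[symmetric] using le[of x] w(2)[of x]
    by (intro mult_nonneg_nonneg) (simp_all add: arctan_le_iff)
  then have d_nonneg: "AE x in m. 0 \<le> d x" by simp
  have "integral\<^sup>L m d \<le> 0"
    using int_le w meas unfolding d_def
    by (subst Bochner_Integration.integral_diff) (auto intro: integrable_arctan_weighted less_imp_le)
  then have "integral\<^sup>L m d = 0"
    using integral_nonneg_AE[OF d_nonneg] by linarith
  then have "AE x in m. d x = 0"
    using integral_nonneg_eq_0_iff_AE[OF int_d d_nonneg] by blast
  then show ?thesis
  proof eventually_elim
    case (elim x)
    then show ?case
      using w(2)[of x] by (simp add: d_def arctan_eq_iff flip: left_diff_distrib)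
  qed
qed

lemma der_bound_Lq_apply:
  assumes "der_bound m q c g" "lip_bs f" "c f \<in> borel_measurable m"
  shows "Lq m q (c f)"
proof -
  obtain L where L: "L-lipschitz_on UNIV f" using lip_bs_lipschitz[OF assms(2)] by blast
  show ?thesis
  proof (rule Lq_mono[OF Lq_cmult[OF der_bound_Lq[OF assms(1)], of L] assms(3)])
    from der_bound_le[OF assms(1,2)] der_bound_nonneg[OF assms(1)]
    show "AE x in m. \<bar>c f x\<bar> \<le> \<bar>L * g x\<bar>"
    proof eventually_elim
      case (elim x)
      have "g x * lip_a f x \<le> g x * L"
        using lip_a_bounds(2)[OF L, of x] elim(2) by (rule mult_left_mono)
      then show ?case using elim(1) by (simp add: mult.commute)
    qed
  qed
qed

lemma ex_lower_bound_in_min_closed: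
  fixes F :: "('a \<Rightarrow> real) set"
  assumes F_nonneg: "\<And>g x. g \<in> F \<Longrightarrow> 0 \<le> g x"
    and F_min: "\<And>g h. g \<in> F \<Longrightarrow> h \<in> F \<Longrightarrow> (\<lambda>x. min (g x) (h x)) \<in> F"
    and F_lim: "\<And>g G. (\<And>n. g n \<in> F) \<Longrightarrow> (\<And>n x. g (Suc n) x \<le> g n x) \<Longrightarrow>
                   (\<And>x. (\<lambda>n. g n x) \<longlonglongrightarrow> G x) \<Longrightarrow> G \<in> F"
    and gs: "\<And>n::nat. gs n \<in> F"
  shows "\<exists>G\<in>F. \<forall>n x. G x \<le> gs n x"
proof -
  define Gs where "Gs = rec_nat (gs 0) (\<lambda>n G x. min (G x) (gs (Suc n) x))"
  have Gs_0: "Gs 0 = gs 0" and Gs_Suc: "Gs (Suc n) = (\<lambda>x. min (Gs n x) (gs (Suc n) x))" for n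
    by (simp_all add: Gs_def)
  have Gs_F: "Gs n \<in> F" for n
    by (induction n) (auto simp: Gs_0 Gs_Suc gs F_min)
  have Gs_le: "Gs n x \<le> gs n x" for n x
    by (cases n) (auto simp: Gs_0 Gs_Suc)
  have Gs_dec: "Gs (Suc n) x \<le> Gs n x" for n x
    by (simp add: Gs_Suc)
  define G where "G x = (INF n. Gs n x)" for x
  have bdd: "bdd_below (range (\<lambda>n. Gs n x))" for x
    using F_nonneg[OF Gs_F] by (intro bdd_belowI) auto
  have "decseq (\<lambda>n. Gs n x)" for x
    using Gs_dec by (rule decseq_SucI)
  then have lim: "(\<lambda>n. Gs n x) \<longlonglongrightarrow> G x" for x
    unfolding G_def by (rule LIMSEQ_decseq_INF[OF bdd])
  have G_le: "G x \<le> Gs n x" for x n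
    unfolding G_def by (rule cINF_lower[OF bdd]) simp
  have "G \<in> F" by (rule F_lim[OF Gs_F Gs_dec lim])
  moreover have "G x \<le> gs n x" for n x
    using G_le Gs_le order_trans by blast
  ultimately show ?thesis by blast
qed

lemma ex_minimizer_in_min_closed:
  fixes F :: "('a \<Rightarrow> real) set" and \<Phi> :: "('a \<Rightarrow> real) \<Rightarrow> real"
  assumes "F \<noteq> {}"
    and F_nonneg: "\<And>g x. g \<in> F \<Longrightarrow> 0 \<le> g x"
    and F_min: "\<And>g h. g \<in> F \<Longrightarrow> h \<in> F \<Longrightarrow> (\<lambda>x. min (g x) (h x)) \<in> F"
    and F_lim: "\<And>g G. (\<And>n. g n \<in> F) \<Longrightarrow> (\<And>n x. g (Suc n) x \<le> g n x) \<Longrightarrow>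
                   (\<And>x. (\<lambda>n. g n x) \<longlonglongrightarrow> G x) \<Longrightarrow> G \<in> F"
    and \<Phi>_mono: "\<And>g h. g \<in> F \<Longrightarrow> h \<in> F \<Longrightarrow> (\<And>x. h x \<le> g x) \<Longrightarrow> \<Phi> h \<le> \<Phi> g"
    and bdd: "bdd_below (\<Phi> ` F)"
  shows "\<exists>G\<in>F. \<forall>g\<in>F. \<Phi> G \<le> \<Phi> g"
proof -
  define I where "I = Inf (\<Phi> ` F)"
  have "\<exists>g\<in>F. \<Phi> g < I + 1 / real (Suc n)" for n
    using cInf_lessD[of "\<Phi> ` F" "I + 1 / real (Suc n)"] assms(1) unfolding I_def by fastforce
  then obtain gs where gs: "\<And>n. gs n \<in> F" "\<And>n. \<Phi> (gs n) < I + 1 / real (Suc n)"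
    by metis
  obtain G where G: "G \<in> F" "\<And>n x. G x \<le> gs n x"
    using ex_lower_bound_in_min_closed[of F gs] F_nonneg F_min F_lim gs(1) by blast
  have "\<Phi> G \<le> I + e" if "0 < e" for e
  proof -
    obtain n where "inverse (real (Suc n)) < e" using reals_Archimedean[OF \<open>0 < e\<close>] by blast
    then show ?thesis
      using \<Phi>_mono[OF gs(1) G(1) G(2), of n] gs(2)[of n] by (simp add: inverse_eq_divide)
  qed
  then have "\<Phi> G \<le> I" by (rule field_le_epsilon)
  moreover have "I \<le> \<Phi> g" if "g \<in> F" for g
    unfolding I_def using that bdd by (auto intro: cInf_lower)
  ultimately show ?thesis using G(1) by force
qed

lemma ex_AE_least_in_min_closed:
  fixes F :: "('a \<Rightarrow> real) set"
  assumes "sigma_finite_measure m" "F \<noteq> {}"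
    and F_meas: "\<And>g. g \<in> F \<Longrightarrow> g \<in> borel_measurable m"
    and F_nonneg: "\<And>g x. g \<in> F \<Longrightarrow> 0 \<le> g x"
    and F_min: "\<And>g h. g \<in> F \<Longrightarrow> h \<in> F \<Longrightarrow> (\<lambda>x. min (g x) (h x)) \<in> F"
    and F_lim: "\<And>g G. (\<And>n. g n \<in> F) \<Longrightarrow> (\<And>n x. g (Suc n) x \<le> g n x) \<Longrightarrow>
                   (\<And>x. (\<lambda>n. g n x) \<longlonglongrightarrow> G x) \<Longrightarrow> G \<in> F"
  shows "\<exists>G\<in>F. \<forall>g\<in>F. AE x in m. G x \<le> g x"
proof -
  obtain w :: "'a \<Rightarrow> real" where w: "integrable m w" "\<And>x. 0 < w x"
    using sigma_finite_measure.obtain_positive_integrable_function[OF assms(1)] by metis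
  define \<Phi> where "\<Phi> g = (\<integral>x. arctan (g x) * w x \<partial>m)" for g
  have mono: "\<Phi> h \<le> \<Phi> g" if "g \<in> F" "h \<in> F" "\<And>x. h x \<le> g x" for g h
    unfolding \<Phi>_def using that w
    by (intro integral_mono integrable_arctan_weighted F_meas)
      (auto simp: arctan_le_iff mult_right_mono less_imp_le)
  have "0 \<le> \<Phi> g" if "g \<in> F" for g
    unfolding \<Phi>_def using F_nonneg[OF that] w(2) by (intro integral_nonneg_AE) (simp add: less_imp_le)
  then have bdd: "bdd_below (\<Phi> ` F)" by (intro bdd_belowI) blast
  have "\<exists>G\<in>F. \<forall>g\<in>F. \<Phi> G \<le> \<Phi> g"
    by (rule ex_minimizer_in_min_closed[of F \<Phi>]) (fact assms(2) F_nonneg F_min F_lim mono bdd)+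
  then obtain G where G: "G \<in> F" "\<And>g. g \<in> F \<Longrightarrow> \<Phi> G \<le> \<Phi> g"
    by blast
  have "AE x in m. G x \<le> g x" if g: "g \<in> F" for g
  proof -
    define H where "H x = min (G x) (g x)" for x
    have H: "H \<in> F" unfolding H_def by (rule F_min[OF G(1) g])
    then have "AE x in m. G x = H x"
      using G(2)[OF H]
      by (intro AE_eq_of_arctan_weighted_integral_le[OF w F_meas[OF G(1)] F_meas[OF H]])
        (simp_all add: H_def \<Phi>_def)
    then show ?thesis by eventually_elim (simp add: H_def)
  qed
  with G(1) show ?thesis by blast
qed

lemma ex_der_norm:
  assumes "sigma_finite_measure m" "der_bound m q b g"
  shows "\<exists>G. is_der_norm m q b G"
proof -
  define F where "F = {g. der_bound m q b g \<and> (\<forall>x. 0 \<le> g x)}"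
  have max_0_in_F: "(\<lambda>x. max (g x) 0) \<in> F" if "der_bound m q b g" for g
    using der_bound_max_0[OF that] by (simp add: F_def)
  have "\<exists>G\<in>F. \<forall>g\<in>F. AE x in m. G x \<le> g x"
  proof (rule ex_AE_least_in_min_closed[OF assms(1)])
    show "F \<noteq> {}" using max_0_in_F[OF assms(2)] by blast
    show "g \<in> borel_measurable m" "0 \<le> g x" if "g \<in> F" for g x
      using that der_bound_measurable by (auto simp: F_def)
    show "(\<lambda>x. min (g x) (h x)) \<in> F" if "g \<in> F" "h \<in> F" for g h
      using that der_bound_min by (auto simp: F_def)
    fix g :: "nat \<Rightarrow> 'a \<Rightarrow> real" and G
    assume F: "\<And>n. g n \<in> F" and dec: "\<And>n x. g (Suc n) x \<le> g n x"
      and lim: "\<And>x. (\<lambda>n. g n x) \<longlonglongrightarrow> G x"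
    have "0 \<le> G x" for x
      using F by (intro LIMSEQ_le_const[OF lim]) (auto simp: F_def)
    moreover have "G x \<le> g 0 x" for x
      using dec by (intro decseq_ge[OF _ lim] decseq_SucI)
    ultimately show "G \<in> F"
      using F by (auto simp: F_def intro: der_bound_LIMSEQ[OF _ lim])
  qed
  then obtain G where G: "G \<in> F" "\<And>g. g \<in> F \<Longrightarrow> AE x in m. G x \<le> g x"
    by blast
  have "AE x in m. G x \<le> g x" if "der_bound m q b g" for g
    using G(2)[OF max_0_in_F[OF that]] der_bound_nonneg[OF that]
    by eventually_elim simp
  then have "is_der_norm m q b G"
    using G(1) by (simp add: is_der_norm_def F_def)
  then show ?thesis by blast
qed

section \<open>Derivations, cycles and subderivations\<close>

lemma is_derivationI:
  assumes "\<And>f. lip_bs f \<Longrightarrow> Lq m q (b f)"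
    and "\<And>f g. lip_bs f \<Longrightarrow> lip_bs g \<Longrightarrow> AE x in m. b (\<lambda>y. f y + g y) x = b f x + b g x"
    and "\<And>f c. lip_bs f \<Longrightarrow> AE x in m. b (\<lambda>y. c * f y) x = c * b f x"
    and "\<And>f g. lip_bs f \<Longrightarrow> lip_bs g \<Longrightarrow>
           AE x in m. b (\<lambda>y. f y * g y) x = f x * b g x + g x * b f x"
    and "der_bound m q b G"
  shows "is_derivation m q b"
  using assms unfolding is_derivation_def by blast

lemma
  assumes "is_derivation m q b"
  shows derivation_Lq: "lip_bs f \<Longrightarrow> Lq m q (b f)"
    and derivation_add: "lip_bs f \<Longrightarrow> lip_bs g \<Longrightarrow> AE x in m. b (\<lambda>y. f y + g y) x = b f x + b g x"
    and derivation_cmult: "lip_bs f \<Longrightarrow> AE x in m. b (\<lambda>y. c * f y) x = c * b f x"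
    and derivation_Leibniz: "lip_bs f \<Longrightarrow> lip_bs g \<Longrightarrow>
           AE x in m. b (\<lambda>y. f y * g y) x = f x * b g x + g x * b f x"
    and derivation_ex_bound: "\<exists>g. der_bound m q b g"
  using assms unfolding is_derivation_def by blast+

lemma derivation_measurable: "is_derivation m q b \<Longrightarrow> lip_bs f \<Longrightarrow> b f \<in> borel_measurable m"
  using derivation_Lq Lq_measurable by blast

lemma der_bound_lincomb:
  assumes "der_bound m q b g" "der_bound m q s h"
  shows "der_bound m q (\<lambda>f x. \<alpha> * b f x + \<beta> * s f x) (\<lambda>x. \<bar>\<alpha>\<bar> * g x + \<bar>\<beta>\<bar> * h x)"
proof (rule der_boundI)
  show "Lq m q (\<lambda>x. \<bar>\<alpha>\<bar> * g x + \<bar>\<beta>\<bar> * h x)"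
    using assms by (intro Lq_add Lq_cmult der_bound_Lq)
  show "AE x in m. 0 \<le> \<bar>\<alpha>\<bar> * g x + \<bar>\<beta>\<bar> * h x"
    using der_bound_nonneg[OF assms(1)] der_bound_nonneg[OF assms(2)] by eventually_elim simp
  fix f :: "'a \<Rightarrow> real" assume "lip_bs f"
  from der_bound_le[OF assms(1) this] der_bound_le[OF assms(2) this]
  show "AE x in m. \<bar>\<alpha> * b f x + \<beta> * s f x\<bar> \<le> (\<bar>\<alpha>\<bar> * g x + \<bar>\<beta>\<bar> * h x) * lip_a f x"
  proof eventually_elim
    case (elim x)
    have "\<bar>\<alpha> * b f x + \<beta> * s f x\<bar> \<le> \<bar>\<alpha>\<bar> * \<bar>b f x\<bar> + \<bar>\<beta>\<bar> * \<bar>s f x\<bar>"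
      by (metis abs_mult abs_triangle_ineq)
    also have "\<dots> \<le> \<bar>\<alpha>\<bar> * (g x * lip_a f x) + \<bar>\<beta>\<bar> * (h x * lip_a f x)"
      using elim by (intro add_mono mult_left_mono) auto
    finally show ?case by (simp add: algebra_simps)
  qed
qed

lemma is_derivation_lincomb:
  assumes "is_derivation m q b" "is_derivation m q s"
  shows "is_derivation m q (\<lambda>f x. \<alpha> * b f x + \<beta> * s f x)"
proof -
  obtain g h where bounds: "der_bound m q b g" "der_bound m q s h"
    using assms derivation_ex_bound by blast
  show ?thesis
  proof (rule is_derivationI[rotated 4, OF der_bound_lincomb[OF bounds]])
    fix f g :: "'a \<Rightarrow> real" and c :: real assume f: "lip_bs f" and g: "lip_bs g"
    show "Lq m q (\<lambda>x. \<alpha> * b f x + \<beta> * s f x)"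
      using assms f by (intro Lq_add Lq_cmult derivation_Lq)
    show "AE x in m. \<alpha> * b (\<lambda>y. f y + g y) x + \<beta> * s (\<lambda>y. f y + g y) x =
        (\<alpha> * b f x + \<beta> * s f x) + (\<alpha> * b g x + \<beta> * s g x)"
      using derivation_add[OF assms(1) f g] derivation_add[OF assms(2) f g]
      by eventually_elim (simp add: algebra_simps)
    show "AE x in m. \<alpha> * b (\<lambda>y. c * f y) x + \<beta> * s (\<lambda>y. c * f y) x =
        c * (\<alpha> * b f x + \<beta> * s f x)"
      using derivation_cmult[OF assms(1) f, of c] derivation_cmult[OF assms(2) f, of c]
      by eventually_elim (simp add: algebra_simps)
    show "AE x in m. \<alpha> * b (\<lambda>y. f y * g y) x + \<beta> * s (\<lambda>y. f y * g y) x =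
        f x * (\<alpha> * b g x + \<beta> * s g x) + g x * (\<alpha> * b f x + \<beta> * s f x)"
      using derivation_Leibniz[OF assms(1) f g] derivation_Leibniz[OF assms(2) f g]
      by eventually_elim (simp add: algebra_simps)
  qed
qed

lemma der_add_lincomb: "der_add b s = (\<lambda>f x. 1 * b f x + 1 * s f x)"
  by (simp add: der_add_def)

lemma der_diff_lincomb: "der_diff b s = (\<lambda>f x. 1 * b f x + (-1) * s f x)"
  by (simp add: der_diff_def)

lemma is_derivation_add:
  "is_derivation m q b \<Longrightarrow> is_derivation m q s \<Longrightarrow> is_derivation m q (der_add b s)"
  unfolding der_add_lincomb by (rule is_derivation_lincomb)

lemma is_derivation_diff:
  "is_derivation m q b \<Longrightarrow> is_derivation m q s \<Longrightarrow> is_derivation m q (der_diff b s)"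
  unfolding der_diff_lincomb by (rule is_derivation_lincomb)

lemma is_derivation_zero: "is_derivation m q (\<lambda>f x. 0)"
  by (rule is_derivationI[where G="\<lambda>x. 0"]) (auto intro: der_boundI simp: Lq_zero)

lemma zero_divergence_lincomb:
  assumes "zero_divergence m b" "zero_divergence m s"
  shows "zero_divergence m (\<lambda>f x. \<alpha> * b f x + \<beta> * s f x)"
  using assms by (simp add: zero_divergence_def)

lemma is_cycle_add: "is_cycle m q b \<Longrightarrow> is_cycle m q s \<Longrightarrow> is_cycle m q (der_add b s)"
  unfolding is_cycle_def der_add_lincomb by (blast intro: is_derivation_lincomb zero_divergence_lincomb)

lemma is_cycle_diff: "is_cycle m q b \<Longrightarrow> is_cycle m q s \<Longrightarrow> is_cycle m q (der_diff b s)"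
  unfolding is_cycle_def der_diff_lincomb by (blast intro: is_derivation_lincomb zero_divergence_lincomb)

lemma is_cycle_zero: "is_cycle m q (\<lambda>f x. 0)"
  by (simp add: is_cycle_def is_derivation_zero zero_divergence_def)

type_synonym 'a derivation = "('a \<Rightarrow> real) \<Rightarrow> 'a \<Rightarrow> real"

definition subcycle ::
  "'a::metric_space measure \<Rightarrow> ennreal \<Rightarrow> 'a derivation \<Rightarrow> 'a derivation \<Rightarrow> bool" where
  "subcycle m q c b \<longleftrightarrow> is_cycle m q c \<and> subderivation m q c b"

lemma acyclic_der_iff: "acyclic_der m q b \<longleftrightarrow> (\<forall>c. subcycle m q c b \<longrightarrow> der_eq m c (\<lambda>f x. 0))"
  by (simp add: acyclic_der_def subcycle_def)

lemma der_add_diff_cancel [simp]: "der_add (der_diff b s) s = b"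
  by (simp add: der_add_def der_diff_def)

lemma der_diff_add: "der_diff b (der_add s t) = der_diff (der_diff b s) t"
  by (simp add: der_add_def der_diff_def algebra_simps)

locale sigma_finite_derivations =
  fixes m :: "'a::metric_space measure" and q :: ennreal
  assumes sigma_finite: "sigma_finite_measure m"
begin

lemma is_der_norm: "is_derivation m q b \<Longrightarrow> is_der_norm m q b (der_norm m q b)"
  unfolding der_norm_def using ex_der_norm[OF sigma_finite] derivation_ex_bound
  by (metis someI_ex)

lemma der_norm_bound: "is_derivation m q b \<Longrightarrow> der_bound m q b (der_norm m q b)"
  using is_der_norm by (simp add: is_der_norm_def)

lemma der_norm_least:
  "is_derivation m q b \<Longrightarrow> der_bound m q b g \<Longrightarrow> AE x in m. der_norm m q b x \<le> g x"
  using is_der_norm by (simp add: is_der_norm_def)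

lemma der_norm_nonneg: "is_derivation m q b \<Longrightarrow> AE x in m. 0 \<le> der_norm m q b x"
  using der_norm_bound der_bound_nonneg by blast

lemma der_norm_Lq: "is_derivation m q b \<Longrightarrow> Lq m q (der_norm m q b)"
  using der_norm_bound der_bound_Lq by blast

lemma der_norm_measurable: "is_derivation m q b \<Longrightarrow> der_norm m q b \<in> borel_measurable m"
  using der_norm_bound der_bound_measurable by blast

lemma der_norm_le:
  "is_derivation m q b \<Longrightarrow> lip_bs f \<Longrightarrow> AE x in m. \<bar>b f x\<bar> \<le> der_norm m q b x * lip_a f x"
  using der_norm_bound der_bound_le by blast

lemma der_norm_add_le:
  assumes "is_derivation m q b" "is_derivation m q s"
  shows "AE x in m. der_norm m q (der_add b s) x \<le> der_norm m q b x + der_norm m q s x"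
  using der_norm_least[OF is_derivation_add[OF assms]]
    der_bound_lincomb[OF der_norm_bound[OF assms(1)] der_norm_bound[OF assms(2)], of 1 1]
  by (simp add: der_add_lincomb)

lemma der_norm_diff_le:
  assumes "is_derivation m q b" "is_derivation m q s"
  shows "AE x in m. der_norm m q (der_diff b s) x \<le> der_norm m q b x + der_norm m q s x"
  using der_norm_least[OF is_derivation_diff[OF assms]]
    der_bound_lincomb[OF der_norm_bound[OF assms(1)] der_norm_bound[OF assms(2)], of 1 "-1"]
  by (simp add: der_diff_lincomb)

lemma der_norm_zero: "AE x in m. der_norm m q (\<lambda>f x. 0) x = 0"
proof -
  have "der_bound m q (\<lambda>f x. 0) (\<lambda>x. 0)"
    by (rule der_boundI) (auto simp: Lq_zero)
  from der_norm_least[OF is_derivation_zero this] der_norm_nonneg[OF is_derivation_zero]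
  show ?thesis by eventually_elim simp
qed

lemma der_eq_zero_if_der_norm_eq_0:
  assumes "is_derivation m q c" "AE x in m. der_norm m q c x = 0"
  shows "der_eq m c (\<lambda>f x. 0)"
  unfolding der_eq_def
proof (intro allI impI)
  fix f :: "'a \<Rightarrow> real" assume "lip_bs f"
  from der_norm_le[OF assms(1) this] assms(2) show "AE x in m. c f x = 0"
    by eventually_elim simp
qed

lemma subderivation_der_norm_diff_le:
  "subderivation m q s b \<Longrightarrow> AE x in m. der_norm m q (der_diff b s) x \<le> der_norm m q b x - der_norm m q s x"
  unfolding subderivation_def by (auto elim: AE_mp)

lemma subderivation_der_norm_le:
  assumes "is_derivation m q b" "subderivation m q s b"
  shows "AE x in m. der_norm m q s x \<le> der_norm m q b x"
proof -
  have "is_derivation m q (der_diff b s)"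
    using assms by (intro is_derivation_diff) (auto simp: subderivation_def)
  from der_norm_nonneg[OF this] subderivation_der_norm_diff_le[OF assms(2)]
  show ?thesis by eventually_elim simp
qed

lemma subderivation_zero: "is_derivation m q b \<Longrightarrow> subderivation m q (\<lambda>f x. 0) b"
  unfolding subderivation_def using der_norm_zero
  by (auto simp: is_derivation_zero der_diff_def elim: AE_mp)

lemma subcycle_zero: "is_derivation m q b \<Longrightarrow> subcycle m q (\<lambda>f x. 0) b"
  by (simp add: subcycle_def is_cycle_zero subderivation_zero)

lemma subderivation_add:
  assumes b: "is_derivation m q b" and s: "subderivation m q s b"
    and t: "subderivation m q t (der_diff b s)"
  shows "subderivation m q (der_add s t) b"
    and "AE x in m. der_norm m q (der_add s t) x = der_norm m q s x + der_norm m q t x"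
proof -
  have ds: "is_derivation m q s" and dt: "is_derivation m q t"
    using s t by (simp_all add: subderivation_def)
  have dst: "is_derivation m q (der_add s t)" by (rule is_derivation_add[OF ds dt])
  have le_s: "AE x in m. der_norm m q (der_diff b s) x + der_norm m q s x \<le> der_norm m q b x"
    using s by (simp add: subderivation_def)
  have le_t: "AE x in m. der_norm m q (der_diff b (der_add s t)) x + der_norm m q t x
      \<le> der_norm m q (der_diff b s) x"
    using t by (simp add: subderivation_def der_diff_add)
  have tri: "AE x in m. der_norm m q (der_add s t) x \<le> der_norm m q s x + der_norm m q t x"
    by (rule der_norm_add_le[OF ds dt])
  have tri': "AE x in m. der_norm m q b x
      \<le> der_norm m q (der_diff b (der_add s t)) x + der_norm m q (der_add s t) x"
    using der_norm_add_le[OF is_derivation_diff[OF b dst] dst] by simp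
  have "AE x in m. der_norm m q (der_diff b (der_add s t)) x + der_norm m q (der_add s t) x
      \<le> der_norm m q b x"
    using le_s le_t tri by eventually_elim simp
  then show "subderivation m q (der_add s t) b"
    using dst by (simp add: subderivation_def)
  show "AE x in m. der_norm m q (der_add s t) x = der_norm m q s x + der_norm m q t x"
    using le_s le_t tri tri' by eventually_elim simp
qed

end

lemma mms_sets: "mms m \<Longrightarrow> sets m = sets borel"
  unfolding mms_def by blast

lemma mms_emeasure_bounded: "mms m \<Longrightarrow> bounded B \<Longrightarrow> B \<in> sets borel \<Longrightarrow> emeasure m B < \<infinity>"
  unfolding mms_def by blast

lemma mms_sigma_finite:
  assumes "mms m"
  shows "sigma_finite_measure m"
proof -
  fix x\<^sub>0 :: 'a
  show ?thesis
    unfolding sigma_finite_measure_def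
  proof (intro exI[of _ "range (\<lambda>n::nat. ball x\<^sub>0 (real n))"] conjI ballI)
    show "range (\<lambda>n::nat. ball x\<^sub>0 (real n)) \<subseteq> sets m"
      unfolding mms_sets[OF assms] by (auto intro: borel_open)
    have "x \<in> \<Union> (range (\<lambda>n::nat. ball x\<^sub>0 (real n)))" for x
    proof -
      obtain n :: nat where "dist x\<^sub>0 x < real n"
        using reals_Archimedean2 by blast
      then show ?thesis by auto
    qed
    moreover have "space m = UNIV"
      using sets_eq_imp_space_eq[OF mms_sets[OF assms]] by simp
    ultimately show "\<Union> (range (\<lambda>n::nat. ball x\<^sub>0 (real n))) = space m"
      by blast
    show "emeasure m A \<noteq> \<infinity>" if A: "A \<in> range (\<lambda>n::nat. ball x\<^sub>0 (real n))" for A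
    proof -
      obtain n :: nat where "A = ball x\<^sub>0 (real n)" using A by blast
      then have "emeasure m A < \<infinity>"
        by (intro mms_emeasure_bounded[OF assms]) auto
      then show ?thesis by simp
    qed
  qed simp
qed

section \<open>Greedy exhaustion by subcycles\<close>

lemma summable_dominated_tail:
  fixes a c :: "nat \<Rightarrow> real"
  assumes dom: "\<And>j. \<bar>a j\<bar> \<le> c j * l" and c: "summable c"
  shows "summable a" and "\<bar>(\<Sum>j. a j) - (\<Sum>j<k. a j)\<bar> \<le> ((\<Sum>j. c j) - (\<Sum>j<k. c j)) * l"
proof -
  have cl: "summable (\<lambda>j. c j * l)" by (rule summable_mult2[OF c])
  have abs_a: "summable (\<lambda>j. \<bar>a j\<bar>)"
    using dom by (intro summable_comparison_test'[OF cl]) auto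
  then show a: "summable a" by (rule summable_rabs_cancel)
  have "\<bar>(\<Sum>j. a j) - (\<Sum>j<k. a j)\<bar> = \<bar>\<Sum>j. a (j + k)\<bar>"
    by (simp add: suminf_minus_initial_segment[OF a])
  also have "\<dots> \<le> (\<Sum>j. \<bar>a (j + k)\<bar>)"
    by (rule summable_rabs) (simp add: summable_ignore_initial_segment[OF abs_a])
  also have "\<dots> \<le> (\<Sum>j. c (j + k) * l)"
    using dom summable_ignore_initial_segment[OF abs_a] summable_ignore_initial_segment[OF cl]
    by (intro suminf_le) auto
  also have "\<dots> = (\<Sum>j. c (j + k)) * l"
    using summable_ignore_initial_segment[OF c] by (rule suminf_mult2[symmetric])
  also have "\<dots> = ((\<Sum>j. c j) - (\<Sum>j<k. c j)) * l"
    by (simp add: suminf_minus_initial_segment[OF c])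
  finally show "\<bar>(\<Sum>j. a j) - (\<Sum>j<k. a j)\<bar> \<le> ((\<Sum>j. c j) - (\<Sum>j<k. c j)) * l" .
qed

locale cycle_decomposition =
  fixes m :: "'a::polish_space measure" and q :: ennreal and b :: "'a derivation"
    and w :: "'a \<Rightarrow> real"
  assumes mms: "mms m" and one_le_q: "1 \<le> q" and derivation: "is_derivation m q b"
    and w_integrable: "integrable m w" and w_pos: "\<And>x. 0 < w x"
begin

sublocale sigma_finite_derivations m q
  by (rule sigma_finite_derivations.intro[OF mms_sigma_finite[OF mms]])

abbreviation N :: "'a derivation \<Rightarrow> 'a \<Rightarrow> real" where
  "N \<equiv> der_norm m q"

text \<open>The density is chosen so that mass is finite on all derivations dominated by b and
  vanishes only on derivations of norm 0.\<close>

definition mass_density :: "'a \<Rightarrow> real" where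
  "mass_density x = w x / (1 + \<bar>N b x\<bar>)"

definition mass :: "'a derivation \<Rightarrow> real" where
  "mass c = (\<integral>x. N c x * mass_density x \<partial>m)"

lemma mass_density_pos: "0 < mass_density x"
  unfolding mass_density_def using w_pos[of x] by (simp add: add_pos_nonneg)

lemma mass_density_measurable [measurable]: "mass_density \<in> borel_measurable m"
  using borel_measurable_integrable[OF w_integrable] der_norm_measurable[OF derivation]
  unfolding mass_density_def[abs_def] by measurable

lemma integrable_mass:
  assumes "is_derivation m q c" "AE x in m. N c x \<le> N b x"
  shows "integrable m (\<lambda>x. N c x * mass_density x)"
proof (rule Bochner_Integration.integrable_bound[OF w_integrable])
  show "(\<lambda>x. N c x * mass_density x) \<in> borel_measurable m"
    using der_norm_measurable[OF assms(1)] by measurable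
  from assms(2) der_norm_nonneg[OF assms(1)]
  show "AE x in m. norm (N c x * mass_density x) \<le> norm (w x)"
  proof eventually_elim
    case (elim x)
    then have "N c x * mass_density x \<le> (1 + \<bar>N b x\<bar>) * mass_density x"
      using mass_density_pos[of x] by (intro mult_right_mono) auto
    also have "\<dots> = w x"
      by (simp add: mass_density_def add_pos_nonneg)
    finally show ?case
      using elim mass_density_pos[of x] w_pos[of x] by simp
  qed
qed

lemma mass_nonneg:
  assumes "is_derivation m q c"
  shows "0 \<le> mass c"
  unfolding mass_def
proof (rule integral_nonneg_AE)
  from der_norm_nonneg[OF assms] show "AE x in m. 0 \<le> N c x * mass_density x"
    by eventually_elim (simp add: mass_density_pos less_imp_le)
qed

lemma mass_mono:
  assumes "is_derivation m q c" "is_derivation m q c'"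
    and "AE x in m. N c x \<le> N c' x" "AE x in m. N c' x \<le> N b x"
  shows "mass c \<le> mass c'"
  unfolding mass_def
proof (rule integral_mono_AE)
  have "AE x in m. N c x \<le> N b x"
    using assms(3,4) by eventually_elim simp
  then show "integrable m (\<lambda>x. N c x * mass_density x)"
    by (rule integrable_mass[OF assms(1)])
  show "integrable m (\<lambda>x. N c' x * mass_density x)"
    by (rule integrable_mass[OF assms(2,4)])
  show "AE x in m. N c x * mass_density x \<le> N c' x * mass_density x"
    using assms(3) by eventually_elim (simp add: mass_density_pos less_imp_le mult_right_mono)
qed

lemma AE_der_norm_eq_0_if_mass_eq_0:
  assumes "is_derivation m q c" "AE x in m. N c x \<le> N b x" "mass c = 0"
  shows "AE x in m. N c x = 0"
proof -
  have "AE x in m. 0 \<le> N c x * mass_density x"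
    using der_norm_nonneg[OF assms(1)] by eventually_elim (simp add: mass_density_pos less_imp_le)
  then have "AE x in m. N c x * mass_density x = 0"
    using assms(3) integral_nonneg_eq_0_iff_AE[OF integrable_mass[OF assms(1,2)]]
    by (simp add: mass_def)
  then show ?thesis
    by eventually_elim (metis mass_density_pos mult_eq_0_iff less_irrefl)
qed

lemma subcycle_der_norm_le:
  assumes "is_derivation m q r" "AE x in m. N r x \<le> N b x" "subcycle m q c r"
  shows "AE x in m. N c x \<le> N b x"
proof -
  have "AE x in m. N c x \<le> N r x"
    using subderivation_der_norm_le[OF assms(1)] assms(3) by (simp add: subcycle_def)
  with assms(2) show ?thesis by eventually_elim simp
qed

lemma subcycle_is_derivation: "subcycle m q c r \<Longrightarrow> is_derivation m q c"
  by (simp add: subcycle_def is_cycle_def)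

lemma ex_almost_maximal_subcycle:
  assumes r: "is_derivation m q r" "AE x in m. N r x \<le> N b x"
  shows "\<exists>c. subcycle m q c r \<and> (\<forall>c'. subcycle m q c' r \<longrightarrow> mass c' \<le> 2 * mass c)"
proof -
  define M where "M = mass ` {c. subcycle m q c r}"
  have zero: "subcycle m q (\<lambda>f x. 0) r" by (rule subcycle_zero[OF r(1)])
  then have "M \<noteq> {}" unfolding M_def by blast
  have "mass c \<le> mass b" if "subcycle m q c r" for c
    using subcycle_der_norm_le[OF r that] subcycle_is_derivation[OF that] derivation
    by (intro mass_mono) auto
  then have "bdd_above M" unfolding M_def by (intro bdd_aboveI) blast
  then have le_Sup: "mass c \<le> Sup M" if "subcycle m q c r" for c
    using that unfolding M_def by (intro cSup_upper) auto
  show ?thesis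
  proof (cases "Sup M \<le> 0")
    case True
    show ?thesis
    proof (intro exI conjI allI impI)
      fix c' assume "subcycle m q c' r"
      with True le_Sup mass_nonneg[OF is_derivation_zero]
      show "mass c' \<le> 2 * mass (\<lambda>f x. 0)" by fastforce
    qed (rule zero)
  next
    case False
    then obtain c where c: "subcycle m q c r" "Sup M / 2 < mass c"
      using less_cSupD[OF \<open>M \<noteq> {}\<close>, of "Sup M / 2"] unfolding M_def by auto
    show ?thesis
    proof (intro exI conjI allI impI)
      fix c' assume "subcycle m q c' r"
      with c(2) le_Sup show "mass c' \<le> 2 * mass c" by fastforce
    qed (rule c(1))
  qed
qed

definition greedy_subcycle :: "'a derivation \<Rightarrow> 'a derivation" where
  "greedy_subcycle s = (SOME c. subcycle m q c (der_diff b s) \<and>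
     (\<forall>c'. subcycle m q c' (der_diff b s) \<longrightarrow> mass c' \<le> 2 * mass c))"

lemma greedy_subcycle:
  assumes "subderivation m q s b"
  shows "subcycle m q (greedy_subcycle s) (der_diff b s)"
    and "subcycle m q c' (der_diff b s) \<Longrightarrow> mass c' \<le> 2 * mass (greedy_subcycle s)"
proof -
  have s: "is_derivation m q s" using assms by (simp add: subderivation_def)
  from subderivation_der_norm_diff_le[OF assms] der_norm_nonneg[OF s]
  have "AE x in m. N (der_diff b s) x \<le> N b x" by eventually_elim simp
  from ex_almost_maximal_subcycle[OF is_derivation_diff[OF derivation s] this]
  have "subcycle m q (greedy_subcycle s) (der_diff b s) \<and>
      (\<forall>c'. subcycle m q c' (der_diff b s) \<longrightarrow> mass c' \<le> 2 * mass (greedy_subcycle s))"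
    unfolding greedy_subcycle_def by (rule someI_ex)
  then show "subcycle m q (greedy_subcycle s) (der_diff b s)"
    and "subcycle m q c' (der_diff b s) \<Longrightarrow> mass c' \<le> 2 * mass (greedy_subcycle s)"
    by blast+
qed

primrec partial_cycle :: "nat \<Rightarrow> 'a derivation" where
  "partial_cycle 0 = (\<lambda>f x. 0)"
| "partial_cycle (Suc n) = der_add (partial_cycle n) (greedy_subcycle (partial_cycle n))"

abbreviation greedy_cycle :: "nat \<Rightarrow> 'a derivation" where
  "greedy_cycle n \<equiv> greedy_subcycle (partial_cycle n)"

abbreviation residual :: "nat \<Rightarrow> 'a derivation" where
  "residual n \<equiv> der_diff b (partial_cycle n)"

lemma partial_cycle_apply: "partial_cycle n f x = (\<Sum>j<n. greedy_cycle j f x)"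
  by (induction n) (simp_all add: der_add_def)

lemma partial_cycle_invariant:
  "is_cycle m q (partial_cycle n) \<and> subderivation m q (partial_cycle n) b \<and>
     (AE x in m. N (partial_cycle n) x = (\<Sum>j<n. N (greedy_cycle j) x))"
proof (induction n)
  case 0
  show ?case using is_cycle_zero subderivation_zero[OF derivation] der_norm_zero by simp
next
  case (Suc n)
  then have sub: "subderivation m q (partial_cycle n) b" by blast
  note C = greedy_subcycle(1)[OF sub]
  note add = subderivation_add[OF derivation sub C[unfolded subcycle_def, THEN conjunct2]]
  have "is_cycle m q (partial_cycle (Suc n))"
    using Suc C unfolding subcycle_def by (auto intro: is_cycle_add)
  moreover have "AE x in m. N (partial_cycle n) x = (\<Sum>j<n. N (greedy_cycle j) x)"
    using Suc by blast
  with add(2) have "AE x in m. N (partial_cycle (Suc n)) x = (\<Sum>j<Suc n. N (greedy_cycle j) x)"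
    by eventually_elim simp
  ultimately show ?case
    using add(1) by simp
qed

lemma is_derivation_partial_cycle: "is_derivation m q (partial_cycle n)"
  using partial_cycle_invariant by (simp add: is_cycle_def)

lemma subderivation_partial_cycle: "subderivation m q (partial_cycle n) b"
  using partial_cycle_invariant by blast

lemma greedy_cycle_subcycle: "subcycle m q (greedy_cycle n) (residual n)"
  by (rule greedy_subcycle(1)[OF subderivation_partial_cycle])

lemma is_derivation_greedy_cycle: "is_derivation m q (greedy_cycle n)"
  by (rule subcycle_is_derivation[OF greedy_cycle_subcycle])

definition norm_series :: "'a \<Rightarrow> real" where
  "norm_series x = (\<Sum>j. N (greedy_cycle j) x)"

definition limit_cycle :: "'a derivation" where
  "limit_cycle f x = (\<Sum>j. greedy_cycle j f x)"

abbreviation cycle_tail :: "nat \<Rightarrow> 'a derivation" where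
  "cycle_tail n \<equiv> der_diff limit_cycle (partial_cycle n)"

lemma AE_norm_series:
  "AE x in m. summable (\<lambda>j. N (greedy_cycle j) x) \<and> (\<forall>j. 0 \<le> N (greedy_cycle j) x) \<and>
     norm_series x \<le> N b x"
proof -
  have "AE x in m. \<forall>n. N (partial_cycle n) x = (\<Sum>j<n. N (greedy_cycle j) x)"
    using partial_cycle_invariant by (simp add: AE_all_countable)
  moreover have "AE x in m. \<forall>n. N (partial_cycle n) x \<le> N b x"
    using subderivation_der_norm_le[OF derivation subderivation_partial_cycle]
    by (simp add: AE_all_countable)
  moreover have "AE x in m. \<forall>j. 0 \<le> N (greedy_cycle j) x"
    using der_norm_nonneg[OF is_derivation_greedy_cycle] by (simp add: AE_all_countable)
  ultimately show ?thesis
  proof eventually_elim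
    case (elim x)
    then have partial_le: "(\<Sum>j<n. N (greedy_cycle j) x) \<le> N b x" for n by metis
    then have "summable (\<lambda>j. N (greedy_cycle j) x)"
      using elim(3) by (intro summableI_nonneg_bounded) auto
    with elim(3) partial_le show ?case
      unfolding norm_series_def by (blast intro: suminf_le_const)
  qed
qed

lemma norm_series_measurable [measurable]: "norm_series \<in> borel_measurable m"
  using der_norm_measurable[OF is_derivation_greedy_cycle]
  unfolding norm_series_def[abs_def] by measurable

lemma limit_cycle_measurable [measurable]: "lip_bs f \<Longrightarrow> limit_cycle f \<in> borel_measurable m"
  using derivation_measurable[OF is_derivation_greedy_cycle]
  unfolding limit_cycle_def[abs_def] by measurable

lemma AE_limit_cycle_tail:
  assumes f: "lip_bs f"
  shows "AE x in m. summable (\<lambda>j. greedy_cycle j f x) \<and>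
     (\<forall>k. \<bar>limit_cycle f x - partial_cycle k f x\<bar>
        \<le> (norm_series x - (\<Sum>j<k. N (greedy_cycle j) x)) * lip_a f x)"
proof -
  have "AE x in m. \<forall>j. \<bar>greedy_cycle j f x\<bar> \<le> N (greedy_cycle j) x * lip_a f x"
    using der_norm_le[OF is_derivation_greedy_cycle f] by (simp add: AE_all_countable)
  with AE_norm_series show ?thesis
  proof eventually_elim
    case (elim x)
    note tail = summable_dominated_tail[of "\<lambda>j. greedy_cycle j f x" "\<lambda>j. N (greedy_cycle j) x",
        OF elim(2)[rule_format] elim(1)[THEN conjunct1]]
    have "summable (\<lambda>j. greedy_cycle j f x)" by (rule tail(1))
    moreover have "\<bar>limit_cycle f x - partial_cycle k f x\<bar>
        \<le> (norm_series x - (\<Sum>j<k. N (greedy_cycle j) x)) * lip_a f x" for k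
      using tail(2)[of k] by (simp only: limit_cycle_def norm_series_def partial_cycle_apply)
    ultimately show ?case by blast
  qed
qed

lemma der_bound_cycle_tail:
  "der_bound m q (cycle_tail k) (\<lambda>x. norm_series x - (\<Sum>j<k. N (greedy_cycle j) x))"
proof (rule der_boundI)
  have tail_bounds: "AE x in m. 0 \<le> norm_series x - (\<Sum>j<k. N (greedy_cycle j) x) \<and>
      norm_series x - (\<Sum>j<k. N (greedy_cycle j) x) \<le> N b x"
    using AE_norm_series
  proof eventually_elim
    case (elim x)
    then have "(\<Sum>j<k. N (greedy_cycle j) x) \<le> norm_series x"
      unfolding norm_series_def by (intro sum_le_suminf) auto
    moreover have "0 \<le> (\<Sum>j<k. N (greedy_cycle j) x)"
      using elim by (intro sum_nonneg) auto
    ultimately show ?case using elim by linarith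
  qed
  have [measurable]: "N (greedy_cycle j) \<in> borel_measurable m" for j
    by (rule der_norm_measurable[OF is_derivation_greedy_cycle])
  show "Lq m q (\<lambda>x. norm_series x - (\<Sum>j<k. N (greedy_cycle j) x))"
  proof (rule Lq_mono[OF der_norm_Lq[OF derivation]])
    show "(\<lambda>x. norm_series x - (\<Sum>j<k. N (greedy_cycle j) x)) \<in> borel_measurable m"
      by measurable
    show "AE x in m. \<bar>norm_series x - (\<Sum>j<k. N (greedy_cycle j) x)\<bar> \<le> \<bar>N b x\<bar>"
      using tail_bounds by eventually_elim simp
  qed
  show "AE x in m. 0 \<le> norm_series x - (\<Sum>j<k. N (greedy_cycle j) x)"
    using tail_bounds by eventually_elim simp
  fix f :: "'a \<Rightarrow> real" assume "lip_bs f"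
  from AE_limit_cycle_tail[OF this]
  show "AE x in m. \<bar>cycle_tail k f x\<bar> \<le> (norm_series x - (\<Sum>j<k. N (greedy_cycle j) x)) * lip_a f x"
    by eventually_elim (simp add: der_diff_def)
qed

lemma der_bound_limit_cycle: "der_bound m q limit_cycle norm_series"
  using der_bound_cycle_tail[of 0] by (simp add: der_diff_def)

lemma AE_summable_greedy_cycles:
  assumes "lip_bs f"
  shows "AE x in m. summable (\<lambda>j. greedy_cycle j f x)"
  using AE_limit_cycle_tail[OF assms] by eventually_elim (rule conjunct1)

lemma partial_cycle_LIMSEQ:
  assumes "summable (\<lambda>j. greedy_cycle j f x)"
  shows "(\<lambda>n. partial_cycle n f x) \<longlonglongrightarrow> limit_cycle f x"
proof -
  have "(\<lambda>n. partial_cycle n f x) = (\<lambda>n. \<Sum>j<n. greedy_cycle j f x)"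
    by (simp only: partial_cycle_apply)
  with assms show ?thesis
    unfolding limit_cycle_def by (simp only: summable_LIMSEQ)
qed

lemma is_derivation_limit_cycle: "is_derivation m q limit_cycle"
proof (rule is_derivationI[OF _ _ _ _ der_bound_limit_cycle])
  fix f g :: "'a \<Rightarrow> real" and c :: real assume f: "lip_bs f" and g: "lip_bs g"
  show "Lq m q (limit_cycle f)"
    by (rule der_bound_Lq_apply[OF der_bound_limit_cycle f limit_cycle_measurable[OF f]])
  have "AE x in m. \<forall>j. greedy_cycle j (\<lambda>y. c * f y) x = c * greedy_cycle j f x"
    using derivation_cmult[OF is_derivation_greedy_cycle f] by (simp add: AE_all_countable)
  with AE_summable_greedy_cycles[OF f]
  show "AE x in m. limit_cycle (\<lambda>y. c * f y) x = c * limit_cycle f x"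
  proof eventually_elim
    case (elim x)
    then show ?case
      unfolding limit_cycle_def using suminf_mult[OF elim(1), of c] by simp
  qed
  have "AE x in m. \<forall>j. greedy_cycle j (\<lambda>y. f y + g y) x = greedy_cycle j f x + greedy_cycle j g x"
    using derivation_add[OF is_derivation_greedy_cycle f g] by (simp add: AE_all_countable)
  with AE_summable_greedy_cycles[OF f] AE_summable_greedy_cycles[OF g]
  show "AE x in m. limit_cycle (\<lambda>y. f y + g y) x = limit_cycle f x + limit_cycle g x"
  proof eventually_elim
    case (elim x)
    have "(\<Sum>j. greedy_cycle j (\<lambda>y. f y + g y) x) = (\<Sum>j. greedy_cycle j f x + greedy_cycle j g x)"
      using elim(3) by simp
    also have "\<dots> = (\<Sum>j. greedy_cycle j f x) + (\<Sum>j. greedy_cycle j g x)"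
      by (rule suminf_add[OF elim(1,2), symmetric])
    finally show ?case unfolding limit_cycle_def .
  qed
  have "AE x in m. \<forall>j. greedy_cycle j (\<lambda>y. f y * g y) x
      = f x * greedy_cycle j g x + g x * greedy_cycle j f x"
    using derivation_Leibniz[OF is_derivation_greedy_cycle f g] by (simp add: AE_all_countable)
  with AE_summable_greedy_cycles[OF f] AE_summable_greedy_cycles[OF g]
  show "AE x in m. limit_cycle (\<lambda>y. f y * g y) x = f x * limit_cycle g x + g x * limit_cycle f x"
  proof eventually_elim
    case (elim x)
    have "(\<Sum>j. greedy_cycle j (\<lambda>y. f y * g y) x)
        = (\<Sum>j. f x * greedy_cycle j g x + g x * greedy_cycle j f x)"
      using elim(3) by simp
    also have "\<dots> = (\<Sum>j. f x * greedy_cycle j g x) + (\<Sum>j. g x * greedy_cycle j f x)"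
      by (rule suminf_add[OF summable_mult[OF elim(2)] summable_mult[OF elim(1)], symmetric])
    also have "\<dots> = f x * (\<Sum>j. greedy_cycle j g x) + g x * (\<Sum>j. greedy_cycle j f x)"
      by (simp add: suminf_mult[OF elim(1)] suminf_mult[OF elim(2)])
    finally show ?case unfolding limit_cycle_def .
  qed
qed

text \<open>These dominate the partial cycles in the convergence of their divergences: |b| is locally
  integrable since q \<ge> 1, and lip_a f vanishes off a bounded neighbourhood of the support of f.\<close>

lemma AE_abs_apply_le_support_bound:
  assumes s: "is_derivation m q s" "AE x in m. N s x \<le> N b x"
    and f: "lip_bs f" "L-lipschitz_on UNIV f"
  shows "AE x in m. \<bar>s f x\<bar> \<le> L * N b x * indicator (support_nbhd f) x"
  using der_norm_le[OF s(1) f(1)] s(2) der_norm_nonneg[OF derivation]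
proof eventually_elim
  case (elim x)
  have "\<bar>s f x\<bar> \<le> N b x * lip_a f x"
    using elim(1,2) lip_a_nonneg[OF f(1)] by (meson mult_right_mono order_trans)
  also have "\<dots> \<le> L * N b x * indicator (support_nbhd f) x"
  proof (cases "x \<in> support_nbhd f")
    case True
    then show ?thesis
      using elim(3) lip_a_bounds(2)[OF f(2), of x] by (simp add: mult.commute mult_right_mono)
  qed (simp add: lip_a_eq_0_outside_support_nbhd[OF f(2)])
  finally show ?case .
qed

lemma integrable_support_bound:
  assumes "lip_bs f"
  shows "integrable m (\<lambda>x. L * N b x * indicator (support_nbhd f) x)"
proof (rule Lq_integrable_indicator[OF one_le_q Lq_cmult[OF der_norm_Lq[OF derivation]]])
  have "support_nbhd f \<in> sets borel" by (rule borel_open[OF open_support_nbhd])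
  then show "support_nbhd f \<in> sets m" by (simp only: mms_sets[OF mms])
  show "emeasure m (support_nbhd f) < \<infinity>"
    using assms \<open>support_nbhd f \<in> sets borel\<close>
    by (intro mms_emeasure_bounded[OF mms] bounded_support_nbhd) (simp add: lip_bs_def)
qed

lemma zero_divergence_limit_cycle: "zero_divergence m limit_cycle"
  unfolding zero_divergence_def
proof (intro allI impI conjI)
  fix f :: "'a \<Rightarrow> real" assume f: "lip_bs f"
  then obtain L where L: "L-lipschitz_on UNIV f" using lip_bs_lipschitz by blast
  have bound: "AE x in m. norm (partial_cycle n f x) \<le> L * N b x * indicator (support_nbhd f) x" for n
    using AE_abs_apply_le_support_bound[OF is_derivation_partial_cycle
        subderivation_der_norm_le[OF derivation subderivation_partial_cycle] f L] by simp
  have "AE x in m. (\<lambda>n. partial_cycle n f x) \<longlonglongrightarrow> limit_cycle f x"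
    using AE_summable_greedy_cycles[OF f] by eventually_elim (rule partial_cycle_LIMSEQ)
  note dominated = limit_cycle_measurable[OF f] derivation_measurable[OF is_derivation_partial_cycle f]
    integrable_support_bound[OF f] this bound
  note convergence = integrable_dominated_convergence integral_dominated_convergence
  note convergence = convergence[where s="\<lambda>n. partial_cycle n f", OF dominated]
  show "integrable m (limit_cycle f)"
    by (rule convergence(1))
  have "integral\<^sup>L m (partial_cycle n f) = 0" for n
    using partial_cycle_invariant f by (simp add: is_cycle_def zero_divergence_def)
  then have "(\<lambda>n. 0) \<longlonglongrightarrow> integral\<^sup>L m (limit_cycle f)"
    using convergence(2) by simp
  then show "integral\<^sup>L m (limit_cycle f) = 0"
    by (simp add: LIMSEQ_const_iff)
qed

lemma is_cycle_limit_cycle: "is_cycle m q limit_cycle"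
  by (simp add: is_cycle_def is_derivation_limit_cycle zero_divergence_limit_cycle)

definition acyclic_part :: "'a derivation" where
  "acyclic_part = der_diff b limit_cycle"

lemma is_derivation_acyclic_part: "is_derivation m q acyclic_part"
  unfolding acyclic_part_def by (rule is_derivation_diff[OF derivation is_derivation_limit_cycle])

lemma acyclic_part_eq: "acyclic_part = der_diff (residual k) (cycle_tail k)"
  by (simp add: acyclic_part_def der_diff_def)

lemma der_norm_cycle_tail_le:
  "AE x in m. N (cycle_tail k) x \<le> norm_series x - (\<Sum>j<k. N (greedy_cycle j) x)"
  by (rule der_norm_least[OF is_derivation_diff[OF is_derivation_limit_cycle is_derivation_partial_cycle]
        der_bound_cycle_tail])

lemma der_norm_residual:
  "AE x in m. N (residual k) x = N b x - (\<Sum>j<k. N (greedy_cycle j) x)"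
proof -
  have "AE x in m. N (partial_cycle k) x = (\<Sum>j<k. N (greedy_cycle j) x)"
    using partial_cycle_invariant by blast
  moreover note subderivation_der_norm_diff_le[OF subderivation_partial_cycle[of k]]
  moreover have "AE x in m. N b x \<le> N (residual k) x + N (partial_cycle k) x"
    using der_norm_add_le[OF is_derivation_diff[OF derivation is_derivation_partial_cycle[of k]]
        is_derivation_partial_cycle[of k]] by simp
  ultimately show ?thesis by eventually_elim simp
qed

lemma der_norm_acyclic_part_le: "AE x in m. N acyclic_part x \<le> N b x - norm_series x"
proof -
  have "AE x in m. N acyclic_part x \<le> N b x - 2 * (\<Sum>j<k. N (greedy_cycle j) x) + norm_series x" for k
    using der_norm_diff_le[OF is_derivation_diff[OF derivation is_derivation_partial_cycle[of k]]
        is_derivation_diff[OF is_derivation_limit_cycle is_derivation_partial_cycle[of k]]]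
      der_norm_residual[of k] der_norm_cycle_tail_le[of k]
    unfolding acyclic_part_eq[of k, symmetric] by eventually_elim simp
  then have "AE x in m. \<forall>k. N acyclic_part x \<le> N b x - 2 * (\<Sum>j<k. N (greedy_cycle j) x) + norm_series x"
    by (simp add: AE_all_countable)
  with AE_norm_series show ?thesis
  proof eventually_elim
    case (elim x)
    have "(\<lambda>k. N b x - 2 * (\<Sum>j<k. N (greedy_cycle j) x) + norm_series x)
        \<longlonglongrightarrow> N b x - 2 * norm_series x + norm_series x"
      unfolding norm_series_def using elim(1) by (intro tendsto_intros summable_LIMSEQ) simp
    then have "N acyclic_part x \<le> N b x - 2 * norm_series x + norm_series x"
      using elim(2) by (intro LIMSEQ_le_const) auto
    then show ?case by simp
  qed
qed

lemma subderivation_acyclic_part: "subderivation m q acyclic_part b"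
proof -
  have "der_diff b acyclic_part = limit_cycle"
    by (simp add: acyclic_part_def der_diff_def)
  moreover have "AE x in m. N limit_cycle x \<le> norm_series x"
    by (rule der_norm_least[OF is_derivation_limit_cycle der_bound_limit_cycle])
  moreover have "AE x in m. N limit_cycle x + N acyclic_part x \<le> N b x"
    using calculation(2) der_norm_acyclic_part_le by eventually_elim simp
  ultimately show ?thesis
    using is_derivation_acyclic_part by (simp add: subderivation_def)
qed

lemma subderivation_cycle_tail: "subderivation m q (cycle_tail k) (residual k)"
  unfolding subderivation_def acyclic_part_eq[of k, symmetric]
proof (intro conjI is_derivation_diff is_derivation_limit_cycle is_derivation_partial_cycle)
  show "AE x in m. N acyclic_part x + N (cycle_tail k) x \<le> N (residual k) x"
    using der_norm_acyclic_part_le der_norm_cycle_tail_le[of k] der_norm_residual[of k]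
    by eventually_elim simp
qed

lemma der_norm_greedy_cycle_le: "AE x in m. N (greedy_cycle k) x \<le> N b x"
  using AE_norm_series
proof eventually_elim
  case (elim x)
  then have "(\<Sum>j\<in>{k}. N (greedy_cycle j) x) \<le> norm_series x"
    unfolding norm_series_def by (intro sum_le_suminf) auto
  with elim show ?case by simp
qed

lemma sum_mass_greedy_cycles_le: "(\<Sum>k<n. mass (greedy_cycle k)) \<le> mass b"
proof -
  have int: "integrable m (\<lambda>x. N (greedy_cycle k) x * mass_density x)" for k
    by (rule integrable_mass[OF is_derivation_greedy_cycle der_norm_greedy_cycle_le])
  have "(\<Sum>k<n. mass (greedy_cycle k)) = (\<integral>x. (\<Sum>k<n. N (greedy_cycle k) x * mass_density x) \<partial>m)"
    unfolding mass_def using int by (rule Bochner_Integration.integral_sum[symmetric])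
  also have "\<dots> = mass (partial_cycle n)"
    unfolding mass_def
  proof (rule integral_cong_AE)
    show "(\<lambda>x. \<Sum>k<n. N (greedy_cycle k) x * mass_density x) \<in> borel_measurable m"
      using int by (intro borel_measurable_sum) (rule borel_measurable_integrable)
    show "(\<lambda>x. N (partial_cycle n) x * mass_density x) \<in> borel_measurable m"
      using der_norm_measurable[OF is_derivation_partial_cycle] by measurable
    show "AE x in m. (\<Sum>k<n. N (greedy_cycle k) x * mass_density x) = N (partial_cycle n) x * mass_density x"
      using partial_cycle_invariant[of n] by (auto simp: sum_distrib_right elim: AE_mp)
  qed
  also have "\<dots> \<le> mass b"
    using subderivation_der_norm_le[OF derivation subderivation_partial_cycle]
    by (intro mass_mono[OF is_derivation_partial_cycle derivation]) auto
  finally show ?thesis .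
qed

text \<open>A subcycle c of the acyclic part, added to the tail of the limit cycle after step k, is a
  subcycle of b minus the k-th partial sum; so the greedy choice at step k bounds its mass.\<close>

lemma mass_subcycle_acyclic_part_le:
  assumes c: "subcycle m q c acyclic_part"
  shows "mass c \<le> 2 * mass (greedy_cycle k)"
proof -
  have residual: "is_derivation m q (residual k)"
    by (rule is_derivation_diff[OF derivation is_derivation_partial_cycle])
  have dc: "is_derivation m q c" and dt: "is_derivation m q (cycle_tail k)"
    using subcycle_is_derivation[OF c] is_derivation_limit_cycle is_derivation_partial_cycle
    by (auto intro: is_derivation_diff)
  have "subderivation m q c (der_diff (residual k) (cycle_tail k))"
    using c by (simp add: subcycle_def acyclic_part_eq[symmetric])
  note sub = subderivation_add[OF residual subderivation_cycle_tail this]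
  have "is_cycle m q (der_add (cycle_tail k) c)"
    using c is_cycle_limit_cycle partial_cycle_invariant
    by (auto simp: subcycle_def intro!: is_cycle_add is_cycle_diff)
  with sub(1) have subcycle: "subcycle m q (der_add (cycle_tail k) c) (residual k)"
    by (simp add: subcycle_def)
  have "AE x in m. N (residual k) x \<le> N b x"
    using der_norm_residual[of k] AE_norm_series by eventually_elim (simp add: sum_nonneg)
  note subcycle_le_b = subcycle_der_norm_le[OF residual this subcycle]
  have "AE x in m. N c x \<le> N (der_add (cycle_tail k) c) x"
    using sub(2) der_norm_nonneg[OF dt] by eventually_elim simp
  then have "mass c \<le> mass (der_add (cycle_tail k) c)"
    by (rule mass_mono[OF dc is_derivation_add[OF dt dc] _ subcycle_le_b])
  also have "\<dots> \<le> 2 * mass (greedy_cycle k)"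
    using greedy_subcycle(2)[OF subderivation_partial_cycle] subcycle by simp
  finally show ?thesis .
qed

lemma acyclic_acyclic_part: "acyclic_der m q acyclic_part"
  unfolding acyclic_der_iff
proof (intro allI impI)
  fix c assume c: "subcycle m q c acyclic_part"
  have dc: "is_derivation m q c" by (rule subcycle_is_derivation[OF c])
  have c_le_b: "AE x in m. N c x \<le> N b x"
    using subcycle_der_norm_le[OF is_derivation_acyclic_part
        subderivation_der_norm_le[OF derivation subderivation_acyclic_part] c] .
  have "real n * mass c \<le> 2 * mass b" for n
  proof -
    have "real n * mass c = (\<Sum>k<n. mass c)" by simp
    also have "\<dots> \<le> (\<Sum>k<n. 2 * mass (greedy_cycle k))"
      by (intro sum_mono mass_subcycle_acyclic_part_le[OF c])
    also have "\<dots> \<le> 2 * mass b"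
      using sum_mass_greedy_cycles_le[of n] by (simp add: sum_distrib_left[symmetric])
    finally show ?thesis .
  qed
  then have "mass c \<le> 0"
    by (metis not_le mult.commute reals_Archimedean3)
  then have "mass c = 0" using mass_nonneg[OF dc] by simp
  from AE_der_norm_eq_0_if_mass_eq_0[OF dc c_le_b this]
  show "der_eq m c (\<lambda>f x. 0)"
    by (rule der_eq_zero_if_der_norm_eq_0[OF dc])
qed

end

theorem proposition4p20:
  fixes m :: "'a::polish_space measure" and q :: ennreal
    and b :: "('a \<Rightarrow> real) \<Rightarrow> 'a \<Rightarrow> real"
  assumes "mms m" and "1 \<le> q" and "is_derivation m q b"
  shows "\<exists>a c. is_cycle m q c \<and> is_derivation m q a \<and> subderivation m q a b \<and>
           acyclic_der m q a \<and> der_eq m b (der_add a c)"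
proof -
  obtain w :: "'a \<Rightarrow> real" where "integrable m w" "\<And>x. 0 < w x"
    using sigma_finite_measure.obtain_positive_integrable_function[OF mms_sigma_finite[OF assms(1)]]
    by metis
  with assms interpret cycle_decomposition m q b w
    by unfold_locales
  have "der_eq m b (der_add acyclic_part limit_cycle)"
    by (simp add: acyclic_part_def der_eq_def)
  then show ?thesis
    using is_cycle_limit_cycle is_derivation_acyclic_part subderivation_acyclic_part
      acyclic_acyclic_part by blast
qed

end
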